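(* Let $V$ be a real vector space with inner products $\langle\cdot,\cdot\rangle_1,\langle\cdot,\cdot\rangle_2$ and induced norms $\|\cdot\|_1,\|\cdot\|_2$. Suppose at least one of the following holds: (1) $\langle\cdot,\cdot\rangle_2=c\langle\cdot,\cdot\rangle_1$ for some $c>0$; (2) $\|\cdot\|_2=c\|\cdot\|_1$ for some $c>0$; (3) the two inner products give the same angle between every pair of nonzero vectors; (4) for all nonzero $x,y$, $\langle x,y\rangle_1=0\iff\langle x,y\rangle_2=0$; (5) for some $\theta_0\in(0,\pi)$, for all nonzero $x,y$ the angle between $x,y$ with respect to $\langle\cdot,\cdot\rangle_1$ is $\theta_0$ iff it is $\theta_0$ with respect to $\langle\cdot,\cdot\rangle_2$. If moreover there is a nonzero $x\in V$ with $\|x\|_1=\|x\|_2$, then $\langle\cdot,\cdot\rangle_1=\langle\cdot,\cdot\rangle_2$.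
   Context: For an inner product $\langle\cdot,\cdot\rangle$ on a real vector space with norm $\|x\|=\sqrt{\langle x,x\rangle}$, the angle between nonzero vectors $x,y$ is the unique $\theta\in[0,\pi]$ with $\cos\theta=\langle x,y\rangle/(\|x\|\|y\|)$. *)

theory Defs
  imports Complex_Main
begin

definition is_inner_product :: "('a::real_vector \<Rightarrow> 'a \<Rightarrow> real) \<Rightarrow> bool" where
  "is_inner_product ip \<longleftrightarrow>
     (\<forall>x y. ip x y = ip y x) \<and>
     (\<forall>x y z. ip (x + y) z = ip x z + ip y z) \<and>
     (\<forall>r x y. ip (r *\<^sub>R x) y = r * ip x y) \<and>
     (\<forall>x. x \<noteq> 0 \<longrightarrow> ip x x > 0)"

definition ip_norm :: "('a \<Rightarrow> 'a \<Rightarrow> real) \<Rightarrow> 'a \<Rightarrow> real" where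
  "ip_norm ip x = sqrt (ip x x)"

definition ip_angle :: "('a \<Rightarrow> 'a \<Rightarrow> real) \<Rightarrow> 'a \<Rightarrow> 'a \<Rightarrow> real" where
  "ip_angle ip x y = arccos (ip x y / (ip_norm ip x * ip_norm ip y))"

end

theory Submission
  imports Defs
begin

(* All five hypotheses imply that ip2 preserves ip1-orthogonality. Decomposing y into a
   multiple of x plus a vector ip1-orthogonal to x then gives ip2 y x = k(x) ip1 y x with
   k(x) = ip2 x x / ip1 x x, and symmetry forces k to be constant (compare x and y directly,
   or via x + y when they are orthogonal). So ip2 = k ip1, and one nonzero vector of equal
   norms gives k = 1. Under the fixed-angle hypothesis, orthogonality of x and y is detected
   by the two vectors w = cos(theta) |y| x +- sin(theta) |x| y, which both make angle theta
   with x in ip1; comparing the ip2-angle conditions for both signs forces ip2 x y = 0. *)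

locale inner_product_form =
  fixes ip :: "'a::real_vector \<Rightarrow> 'a \<Rightarrow> real"
  assumes is_ip: "is_inner_product ip"
begin

lemma sym: "ip x y = ip y x"
  using is_ip unfolding is_inner_product_def by blast

lemma add_left [simp]: "ip (x + y) z = ip x z + ip y z"
  using is_ip unfolding is_inner_product_def by blast

lemma scaleR_left [simp]: "ip (r *\<^sub>R x) y = r * ip x y"
  using is_ip unfolding is_inner_product_def by blast

lemma pos: "x \<noteq> 0 \<Longrightarrow> ip x x > 0"
  using is_ip unfolding is_inner_product_def by blast

lemma add_right [simp]: "ip z (x + y) = ip z x + ip z y"
  using add_left sym by metis

lemma scaleR_right [simp]: "ip y (r *\<^sub>R x) = r * ip y x"
  using scaleR_left sym by metis

lemma zero_left [simp]: "ip 0 y = 0"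
  using scaleR_left[of 0 y y] by simp

lemma zero_right [simp]: "ip y 0 = 0"
  using zero_left sym by metis

lemma minus_left [simp]: "ip (- x) y = - ip x y"
  using scaleR_left[of "-1" x y] by simp

lemma minus_right [simp]: "ip y (- x) = - ip y x"
  using scaleR_right[of y "-1" x] by simp

lemma diff_left [simp]: "ip (x - y) z = ip x z - ip y z"
  using add_left[of x "-y" z] by simp

lemma diff_right [simp]: "ip z (x - y) = ip z x - ip z y"
  using add_right[of z x "-y"] by simp

lemma nonneg: "ip x x \<ge> 0"
  by (cases "x = 0") (auto dest: pos)

lemma norm_power2: "(ip_norm ip x)\<^sup>2 = ip x x"
  unfolding ip_norm_def using nonneg by simp

lemma norm_nonneg: "ip_norm ip x \<ge> 0"
  unfolding ip_norm_def using nonneg by simp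

lemma norm_pos: "x \<noteq> 0 \<Longrightarrow> ip_norm ip x > 0"
  unfolding ip_norm_def using pos by simp

lemma Cauchy_Schwarz_power2: "(ip x y)\<^sup>2 \<le> ip x x * ip y y"
proof (cases "y = 0")
  case False
  define l where "l = ip x y / ip y y"
  have yy: "ip y y > 0" using pos False by simp
  have "0 \<le> ip (x - l *\<^sub>R y) (x - l *\<^sub>R y)" by (rule nonneg)
  also have "\<dots> = ip x x - 2 * l * ip x y + l\<^sup>2 * ip y y"
    by (simp add: sym[of y x] power2_eq_square algebra_simps)
  also have "\<dots> = ip x x - (ip x y)\<^sup>2 / ip y y"
    using yy by (simp add: l_def power2_eq_square field_simps)
  finally show ?thesis using yy by (simp add: field_simps)
qed simp

lemma Cauchy_Schwarz: "\<bar>ip x y\<bar> \<le> ip_norm ip x * ip_norm ip y"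
proof (rule power2_le_imp_le)
  show "\<bar>ip x y\<bar>\<^sup>2 \<le> (ip_norm ip x * ip_norm ip y)\<^sup>2"
    using Cauchy_Schwarz_power2 by (simp add: power_mult_distrib norm_power2)
qed (simp add: norm_nonneg)

lemma angle_eq_iff:
  assumes "x \<noteq> 0" "y \<noteq> 0" "0 \<le> \<theta>" "\<theta> \<le> pi"
  shows "ip_angle ip x y = \<theta> \<longleftrightarrow> ip x y = cos \<theta> * ip_norm ip x * ip_norm ip y"
proof -
  define n where "n = ip_norm ip x * ip_norm ip y"
  define r where "r = ip x y / n"
  have n: "n > 0" using norm_pos assms by (simp add: n_def)
  have "\<bar>r\<bar> \<le> 1"
    using Cauchy_Schwarz[of x y] n by (simp add: r_def n_def abs_divide divide_le_eq)
  hence r: "-1 \<le> r" "r \<le> 1" by auto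
  have "ip_angle ip x y = \<theta> \<longleftrightarrow> arccos r = \<theta>"
    by (simp add: ip_angle_def r_def n_def)
  also have "\<dots> \<longleftrightarrow> r = cos \<theta>"
    using cos_arccos[OF r] arccos_cos[OF assms(3,4)] by metis
  also have "\<dots> \<longleftrightarrow> ip x y = cos \<theta> * n"
    using n by (auto simp: r_def divide_eq_eq)
  finally show ?thesis by (simp add: n_def mult.assoc)
qed

lemma angle_eq_pi_half_iff:
  "x \<noteq> 0 \<Longrightarrow> y \<noteq> 0 \<Longrightarrow> ip_angle ip x y = pi / 2 \<longleftrightarrow> ip x y = 0"
  using angle_eq_iff[of x y "pi / 2"] by simp

lemma angle_eq_imp_inner_power2:
  assumes "x \<noteq> 0" "y \<noteq> 0" "0 \<le> \<theta>" "\<theta> \<le> pi" "ip_angle ip x y = \<theta>"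
  shows "(ip x y)\<^sup>2 = (cos \<theta>)\<^sup>2 * ip x x * ip y y"
  using angle_eq_iff[OF assms(1-4)] assms(5)
  by (simp add: power_mult_distrib norm_power2)

lemma angle_with_rotated:
  assumes x: "x \<noteq> 0" and y: "y \<noteq> 0" and xy: "ip x y = 0"
    and \<theta>: "0 < \<theta>" "\<theta> < pi" and \<sigma>: "\<sigma>\<^sup>2 = 1"
  defines "w \<equiv> (cos \<theta> * ip_norm ip y) *\<^sub>R x + (\<sigma> * sin \<theta> * ip_norm ip x) *\<^sub>R y"
  shows "w \<noteq> 0" and "ip_angle ip x w = \<theta>"
proof -
  have yx: "ip y x = 0" using xy sym by metis
  have "ip w w = (cos \<theta> * ip_norm ip y)\<^sup>2 * ip x x + (\<sigma> * sin \<theta> * ip_norm ip x)\<^sup>2 * ip y y"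
    using xy yx by (simp add: w_def power2_eq_square algebra_simps)
  also have "\<dots> = ((cos \<theta>)\<^sup>2 + (sin \<theta>)\<^sup>2) * (ip_norm ip x * ip_norm ip y)\<^sup>2"
    using \<sigma> by (simp add: norm_power2[symmetric] power_mult_distrib algebra_simps del: sin_cos_squared_add2)
  finally have ww: "ip w w = (ip_norm ip x * ip_norm ip y)\<^sup>2" by simp
  have nxy: "ip_norm ip x * ip_norm ip y > 0" using norm_pos x y by simp
  then show w: "w \<noteq> 0" using ww by auto
  have "ip_norm ip w = ip_norm ip x * ip_norm ip y"
    unfolding ip_norm_def[of ip w] ww using nxy by simp
  moreover have "ip x w = cos \<theta> * ip_norm ip x * (ip_norm ip x * ip_norm ip y)"
    using xy by (simp add: w_def norm_power2[symmetric] power2_eq_square)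
  ultimately show "ip_angle ip x w = \<theta>"
    using angle_eq_iff[OF x w] \<theta> by simp
qed

end

definition preserves_orthogonality :: "('a \<Rightarrow> 'a \<Rightarrow> real) \<Rightarrow> ('a \<Rightarrow> 'a \<Rightarrow> real) \<Rightarrow> bool" where
  "preserves_orthogonality ip1 ip2 \<longleftrightarrow> (\<forall>x y. ip1 x y = 0 \<longrightarrow> ip2 x y = 0)"

context
  fixes ip1 ip2 :: "'a::real_vector \<Rightarrow> 'a \<Rightarrow> real"
  assumes ip1: "inner_product_form ip1" and ip2: "inner_product_form ip2"
begin

interpretation a: inner_product_form ip1 by (fact ip1)
interpretation b: inner_product_form ip2 by (fact ip2)

lemma preserves_orthogonalityI:
  "(\<And>x y. x \<noteq> 0 \<Longrightarrow> y \<noteq> 0 \<Longrightarrow> ip1 x y = 0 \<Longrightarrow> ip2 x y = 0)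
    \<Longrightarrow> preserves_orthogonality ip1 ip2"
  unfolding preserves_orthogonality_def by (metis b.zero_left b.zero_right)

lemma preserves_orthogonality_imp_inner_eq:
  assumes "preserves_orthogonality ip1 ip2" "x \<noteq> 0"
  shows "ip2 y x = ip1 y x * (ip2 x x / ip1 x x)"
proof -
  have xx: "ip1 x x > 0" using a.pos assms(2) by simp
  define c where "c = ip1 y x / ip1 x x"
  have "ip1 (y - c *\<^sub>R x) x = 0" using xx by (simp add: c_def)
  hence "ip2 (y - c *\<^sub>R x) x = 0" using assms(1) unfolding preserves_orthogonality_def by blast
  then show ?thesis by (simp add: c_def)
qed

lemma preserves_orthogonality_imp_scalar_multiple:
  assumes po: "preserves_orthogonality ip1 ip2"
  obtains c where "\<And>x y. ip2 x y = c * ip1 x y"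
proof (cases "\<exists>x0::'a. x0 \<noteq> 0")
  case True
  then obtain x0 :: 'a where x0: "x0 \<noteq> 0" by blast
  define k where "k x = ip2 x x / ip1 x x" for x
  have k: "ip2 y x = ip1 y x * k x" if "x \<noteq> 0" for x y
    unfolding k_def by (rule preserves_orthogonality_imp_inner_eq[OF po that])
  have k_eq: "k x = k y" if "x \<noteq> 0" "y \<noteq> 0" "ip1 x y \<noteq> 0" for x y
    using k[of x y] k[of y x] that a.sym[of x y] b.sym[of x y] by (metis mult_left_cancel)
  have k_const: "k x = k x0" if x: "x \<noteq> 0" for x
  proof (cases "ip1 x x0 = 0")
    case False
    then show ?thesis using k_eq[OF x x0] by simp
  next
    case True
    have "ip1 x (x + x0) \<noteq> 0" "ip1 x0 (x + x0) \<noteq> 0"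
      using True a.pos[OF x] a.pos[OF x0] a.sym[of x x0] by simp_all
    moreover have "x + x0 \<noteq> 0"
    proof
      assume "x + x0 = 0"
      then have "x0 = - x" by (metis add.commute eq_neg_iff_add_eq_0)
      then show False using True a.pos[OF x] by simp
    qed
    ultimately show ?thesis using k_eq[of x "x + x0"] k_eq[of x0 "x + x0"] x x0 by simp
  qed
  show ?thesis
  proof (rule that[of "k x0"])
    fix x y :: 'a
    show "ip2 x y = k x0 * ip1 x y"
      using k[of y x] k_const[of y] by (cases "y = 0") simp_all
  qed
next
  case False
  then have "x = 0" for x :: 'a by blast
  then show ?thesis using that[of 1] by (metis a.zero_left b.zero_left mult_1)
qed

lemma scalar_multiple_eq_if_norm_eq:
  assumes c: "\<And>x y. ip2 x y = c * ip1 x y"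
    and x0: "x0 \<noteq> 0" "ip_norm ip1 x0 = ip_norm ip2 x0"
  shows "ip1 = ip2"
proof -
  have "ip1 x0 x0 = ip2 x0 x0"
    using x0(2) a.norm_power2[of x0] b.norm_power2[of x0] by metis
  hence "c * ip1 x0 x0 = 1 * ip1 x0 x0" using c[of x0 x0] by linarith
  hence "c = 1" using a.pos[OF x0(1)] by simp
  then show ?thesis using c by (intro ext) simp
qed

lemma norm_multiple_imp_inner_multiple:
  assumes c: "\<And>x. ip_norm ip2 x = c * ip_norm ip1 x"
  shows "ip2 x y = c\<^sup>2 * ip1 x y"
proof -
  have sq: "ip2 z z = c\<^sup>2 * ip1 z z" for z
    using c[of z] a.norm_power2[of z] b.norm_power2[of z] by (metis power_mult_distrib)
  have "ip2 (x + y) (x + y) = c\<^sup>2 * ip1 (x + y) (x + y)" by (rule sq)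
  then have "ip2 x x + 2 * ip2 x y + ip2 y y = c\<^sup>2 * (ip1 x x + 2 * ip1 x y + ip1 y y)"
    using a.sym[of y x] b.sym[of y x] by (simp add: algebra_simps)
  then show ?thesis using sq[of x] sq[of y] by (simp add: algebra_simps)
qed

lemma angle_preserving_imp_preserves_orthogonality:
  assumes \<theta>: "0 < \<theta>" "\<theta> < pi"
    and angle: "\<And>x y. x \<noteq> 0 \<Longrightarrow> y \<noteq> 0 \<Longrightarrow> ip_angle ip1 x y = \<theta> \<Longrightarrow> ip_angle ip2 x y = \<theta>"
  shows "preserves_orthogonality ip1 ip2"
proof (rule preserves_orthogonalityI)
  fix x y :: 'a
  assume x: "x \<noteq> 0" and y: "y \<noteq> 0" and xy: "ip1 x y = 0"
  define p where "p = cos \<theta> * ip_norm ip1 y"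
  define q where "q = sin \<theta> * ip_norm ip1 x"
  define A B D where "A = ip2 x x" and "B = ip2 x y" and "D = ip2 y y"
  have q: "q > 0" using sin_gt_zero[OF \<theta>] a.norm_pos[OF x] by (simp add: q_def)
  have A: "A > 0" using b.pos[OF x] by (simp add: A_def)
  have angle_identity:
    "(p * A + \<sigma> * q * B)\<^sup>2 = (cos \<theta>)\<^sup>2 * A * (p\<^sup>2 * A + 2 * \<sigma> * p * q * B + \<sigma>\<^sup>2 * q\<^sup>2 * D)"
    if \<sigma>: "\<sigma>\<^sup>2 = 1" for \<sigma> :: real
  proof -
    define w where "w = p *\<^sub>R x + (\<sigma> * q) *\<^sub>R y"
    have "w \<noteq> 0" "ip_angle ip1 x w = \<theta>"
      using a.angle_with_rotated[OF x y xy \<theta> \<sigma>] by (simp_all add: w_def p_def q_def mult.assoc)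
    then have "(ip2 x w)\<^sup>2 = (cos \<theta>)\<^sup>2 * ip2 x x * ip2 w w"
      using b.angle_eq_imp_inner_power2[OF x] angle[OF x] \<theta> by simp
    then show ?thesis
      using b.sym[of y x] by (simp add: w_def A_def B_def D_def power2_eq_square algebra_simps)
  qed
  have "4 * p * q * A * B * (1 - (cos \<theta>)\<^sup>2)
        = ((p * A + q * B)\<^sup>2 - (p * A - q * B)\<^sup>2)
          - ((cos \<theta>)\<^sup>2 * A * (p\<^sup>2 * A + 2 * p * q * B + q\<^sup>2 * D)
             - (cos \<theta>)\<^sup>2 * A * (p\<^sup>2 * A - 2 * p * q * B + q\<^sup>2 * D))"
    by algebra
  also have "\<dots> = 0" using angle_identity[of 1] angle_identity[of "-1"] by simp
  finally have "4 * p * q * A * B * (sin \<theta>)\<^sup>2 = 0" by (simp add: sin_squared_eq)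
  then have "p * B = 0" using q A sin_gt_zero[OF \<theta>] by simp
  moreover have "p = 0 \<Longrightarrow> (q * B)\<^sup>2 = 0"
    using angle_identity[of 1] a.norm_pos[OF y] by (simp add: p_def)
  ultimately show "ip2 x y = 0" using q by (auto simp: B_def)
qed

end

theorem mainTheorem7:
  fixes ip1 ip2 :: "'a::real_vector \<Rightarrow> 'a \<Rightarrow> real"
  assumes ip1: "is_inner_product ip1"
    and ip2: "is_inner_product ip2"
    and cond:
      "(\<exists>c>0. \<forall>x y. ip2 x y = c * ip1 x y)
       \<or> (\<exists>c>0. \<forall>x. ip_norm ip2 x = c * ip_norm ip1 x)
       \<or> (\<forall>x y. x \<noteq> 0 \<longrightarrow> y \<noteq> 0 \<longrightarrow> ip_angle ip1 x y = ip_angle ip2 x y)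
       \<or> (\<forall>x y. x \<noteq> 0 \<longrightarrow> y \<noteq> 0 \<longrightarrow> (ip1 x y = 0 \<longleftrightarrow> ip2 x y = 0))
       \<or> (\<exists>\<theta>0. 0 < \<theta>0 \<and> \<theta>0 < pi \<and>
            (\<forall>x y. x \<noteq> 0 \<longrightarrow> y \<noteq> 0 \<longrightarrow>
               (ip_angle ip1 x y = \<theta>0 \<longleftrightarrow> ip_angle ip2 x y = \<theta>0)))"
    and eqn: "\<exists>x. x \<noteq> 0 \<and> ip_norm ip1 x = ip_norm ip2 x"
  shows "ip1 = ip2"
proof -
  have forms: "inner_product_form ip1" "inner_product_form ip2"
    using ip1 ip2 by (auto intro: inner_product_form.intro)
  have "preserves_orthogonality ip1 ip2"
    using cond
  proof (elim disjE exE conjE)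
    fix c assume "\<forall>x y. ip2 x y = c * ip1 x y"
    then show ?thesis unfolding preserves_orthogonality_def by simp
  next
    fix c assume "\<forall>x. ip_norm ip2 x = c * ip_norm ip1 x"
    then have "ip2 x y = c\<^sup>2 * ip1 x y" for x y
      by (intro norm_multiple_imp_inner_multiple[OF forms]) simp
    then show ?thesis unfolding preserves_orthogonality_def by simp
  next
    assume "\<forall>x y. x \<noteq> 0 \<longrightarrow> y \<noteq> 0 \<longrightarrow> ip_angle ip1 x y = ip_angle ip2 x y"
    then show ?thesis
      using forms[THEN inner_product_form.angle_eq_pi_half_iff]
      by (intro preserves_orthogonalityI[OF forms]) metis
  next
    fix \<theta> assume "0 < \<theta>" "\<theta> < pi"
      "\<forall>x y. x \<noteq> 0 \<longrightarrow> y \<noteq> 0 \<longrightarrow> (ip_angle ip1 x y = \<theta> \<longleftrightarrow> ip_angle ip2 x y = \<theta>)"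
    then show ?thesis
      by (intro angle_preserving_imp_preserves_orthogonality[OF forms]) auto
  next
    assume "\<forall>x y. x \<noteq> 0 \<longrightarrow> y \<noteq> 0 \<longrightarrow> (ip1 x y = 0 \<longleftrightarrow> ip2 x y = 0)"
    then show ?thesis by (intro preserves_orthogonalityI[OF forms]) blast
  qed
  then obtain c where "\<And>x y. ip2 x y = c * ip1 x y"
    using preserves_orthogonality_imp_scalar_multiple[OF forms] by blast
  with eqn show ?thesis
    using scalar_multiple_eq_if_norm_eq[OF forms] by blast
qed

end
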